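(* Let $\sigma$ be a $\Phi$-nondegenerate super filling of $\mathrm{dg}(\lambda)$ (order $<_2$) with distinguished cell $u$. Then $\Phi_u(\sigma)$ is again $\Phi$-nondegenerate with the same distinguished cell $u$ (so $\sigma\mapsto\Phi_u(\sigma)$ is an involution on $\Phi$-nondegenerate super fillings), and \[ q^{p(\Phi_u(\sigma))+\mathrm{maj}(\Phi_u(\sigma))}t^{\mathrm{quinv}(\Phi_u(\sigma))}=q^{p(\sigma)+\mathrm{maj}(\sigma)}t^{\mathrm{quinv}(\sigma)}. \]
   Context: Let $\lambda=(\lambda_1\ge\dots\ge\lambda_k>0)$ be a partition; $\mathrm{dg}(\lambda)=\{(r,i):1\le i\le k,1\le r\le\lambda_i\}$, $(r,i)$ being row $r$ from the bottom and column $i$ from the left (columns bottom-justified of heights $\lambda_i$); $\mathrm{leg}((r,i))=\lambda_i-r$. $\mathcal A=\{1,\bar1,2,\bar2,\dots\}$ consists of positive letters $i$ and negative letters $\bar i$, $|i|=|\bar i|=i$, totally ordered by $<_2$: $0<1<2<3<\cdots<\bar3<\bar2<\bar1$. $I(a,b)=1$ if $a>b$ or $a=b$ is negative, and $I(a,b)=0$ if $a<b$ or $a=b$ is positive. A super filling is $\sigma:\mathrm{dg}(\lambda)\to\mathcal A$; a cell $u=(r,i)$, $r>1$, is a descent if $I(\sigma(u),\sigma((r-1,i)))=1$, and $\mathrm{maj}(\sigma)=\sum_{\text{descents }u}(\mathrm{leg}(u)+1)$. A triple is either three cells $(r+1,i),(r,i),(r,j)$ with $i<j$, or (degenerate) two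 cells $(r,i),(r,j)$ with $i<j$ and $\lambda_i=r$; with $a=\sigma((r+1,i))$ ($a=0$ if degenerate), $b=\sigma((r,i))$, $c=\sigma((r,j))$, it is a quinv triple iff exactly one of $I(a,b)=1$, $I(c,b)=0$, $I(a,c)=0$ holds; $\mathrm{quinv}(\sigma)$ is their number. $p(\sigma)$ is the number of positive entries. The reading order goes through rows top to bottom, each row right to left. $\Phi_u(\sigma)$ changes the sign of the entry in cell $u$. The distinguished label of $\sigma$ is the smallest positive integer $a$ such that some cell $(r,j)$ has $|\sigma((r,j))|=a$ and $r>a$; the distinguished cell is the first cell in reading order whose entry has absolute value $a$; $\sigma$ is $\Phi$-nondegenerate if $a$ exists and the distinguished cell belongs to no degenerate triple. *)

theory Defs
  imports Main
begin

text \<open>Partitions are lists lam = [lam_1,...,lam_k], weakly decreasing, positive.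
  Columns are indexed 1..k, rows 1..lam_i (from the bottom).\<close>

definition is_partition :: "nat list \<Rightarrow> bool" where
  "is_partition lam \<longleftrightarrow> sorted_wrt (\<ge>) lam \<and> (\<forall>x\<in>set lam. 0 < x)"

definition part :: "nat list \<Rightarrow> nat \<Rightarrow> nat" where
  "part lam i = lam ! (i - 1)"

text \<open>Cells are pairs (r,i): row r from the bottom, column i from the left.\<close>
definition dg :: "nat list \<Rightarrow> (nat \<times> nat) set" where
  "dg lam = {(r, i). 1 \<le> i \<and> i \<le> length lam \<and> 1 \<le> r \<and> r \<le> part lam i}"

definition leg :: "nat list \<Rightarrow> nat \<times> nat \<Rightarrow> nat" where
  "leg lam u = part lam (snd u) - fst u"

text \<open>Letters are encoded as nonzero integers: the positive letter i is the
  integer i, the negative letter bar i is the integer -i; 0 plays the role of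
  the auxiliary symbol 0. The order <_2 : 0 < 1 < 2 < ... < bar 3 < bar 2 < bar 1.\<close>
definition lt2 :: "int \<Rightarrow> int \<Rightarrow> bool" where
  "lt2 a b \<longleftrightarrow> (0 \<le> a \<and> 0 \<le> b \<and> a < b) \<or> (0 \<le> a \<and> b < 0) \<or> (a < 0 \<and> b < 0 \<and> a < b)"

definition Ind :: "int \<Rightarrow> int \<Rightarrow> bool" where
  "Ind a b \<longleftrightarrow> lt2 b a \<or> (a = b \<and> a < 0)"

definition super_filling :: "nat list \<Rightarrow> (nat \<times> nat \<Rightarrow> int) \<Rightarrow> bool" where
  "super_filling lam \<sigma> \<longleftrightarrow> (\<forall>u\<in>dg lam. \<sigma> u \<noteq> 0)"

definition descent :: "nat list \<Rightarrow> (nat \<times> nat \<Rightarrow> int) \<Rightarrow> nat \<times> nat \<Rightarrow> bool" where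
  "descent lam \<sigma> u \<longleftrightarrow> u \<in> dg lam \<and> 1 < fst u \<and> Ind (\<sigma> u) (\<sigma> (fst u - 1, snd u))"

definition maj :: "nat list \<Rightarrow> (nat \<times> nat \<Rightarrow> int) \<Rightarrow> nat" where
  "maj lam \<sigma> = (\<Sum>u\<in>{u. descent lam \<sigma> u}. leg lam u + 1)"

text \<open>Triples, indexed by (r,i,j): cells (r+1,i),(r,i),(r,j) with i<j, or
  (degenerate) cells (r,i),(r,j) with i<j and lam_i = r.\<close>
definition triples :: "nat list \<Rightarrow> (nat \<times> nat \<times> nat) set" where
  "triples lam = {(r, i, j). (r, i) \<in> dg lam \<and> (r, j) \<in> dg lam \<and> i < j \<and>
                            ((r + 1, i) \<in> dg lam \<or> part lam i = r)}"

definition degenerate_triple :: "nat list \<Rightarrow> nat \<times> nat \<times> nat \<Rightarrow> bool" where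
  "degenerate_triple lam t \<longleftrightarrow> t \<in> triples lam \<and> part lam (fst (snd t)) = fst t"

definition triple_top :: "nat list \<Rightarrow> (nat \<times> nat \<Rightarrow> int) \<Rightarrow> nat \<Rightarrow> nat \<Rightarrow> int" where
  "triple_top lam \<sigma> r i = (if part lam i = r then 0 else \<sigma> (r + 1, i))"

definition quinv_triple :: "nat list \<Rightarrow> (nat \<times> nat \<Rightarrow> int) \<Rightarrow> nat \<times> nat \<times> nat \<Rightarrow> bool" where
  "quinv_triple lam \<sigma> t \<longleftrightarrow>
     (case t of (r, i, j) \<Rightarrow>
       (let a = triple_top lam \<sigma> r i; b = \<sigma> (r, i); c = \<sigma> (r, j) in
          of_bool (Ind a b) + of_bool (\<not> Ind c b) + of_bool (\<not> Ind a c) = (1::nat)))"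

definition quinv :: "nat list \<Rightarrow> (nat \<times> nat \<Rightarrow> int) \<Rightarrow> nat" where
  "quinv lam \<sigma> = card {t \<in> triples lam. quinv_triple lam \<sigma> t}"

definition pos_count :: "nat list \<Rightarrow> (nat \<times> nat \<Rightarrow> int) \<Rightarrow> nat" where
  "pos_count lam \<sigma> = card {u \<in> dg lam. 0 < \<sigma> u}"

definition reads_before :: "nat \<times> nat \<Rightarrow> nat \<times> nat \<Rightarrow> bool" where
  "reads_before u v \<longleftrightarrow> fst u > fst v \<or> (fst u = fst v \<and> snd u > snd v)"

definition has_dist_label :: "nat list \<Rightarrow> (nat \<times> nat \<Rightarrow> int) \<Rightarrow> bool" where
  "has_dist_label lam \<sigma> \<longleftrightarrow>
     (\<exists>a::nat. 0 < a \<and> (\<exists>(r, j)\<in>dg lam. \<bar>\<sigma> (r, j)\<bar> = int a \<and> r > a))"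

definition dist_label :: "nat list \<Rightarrow> (nat \<times> nat \<Rightarrow> int) \<Rightarrow> nat" where
  "dist_label lam \<sigma> =
     (LEAST a::nat. 0 < a \<and> (\<exists>(r, j)\<in>dg lam. \<bar>\<sigma> (r, j)\<bar> = int a \<and> r > a))"

definition dist_cell :: "nat list \<Rightarrow> (nat \<times> nat \<Rightarrow> int) \<Rightarrow> nat \<times> nat" where
  "dist_cell lam \<sigma> =
     (THE u. u \<in> dg lam \<and> \<bar>\<sigma> u\<bar> = int (dist_label lam \<sigma>) \<and>
             (\<forall>v\<in>dg lam. \<bar>\<sigma> v\<bar> = int (dist_label lam \<sigma>) \<longrightarrow> v \<noteq> u \<longrightarrow> reads_before u v))"

definition in_degenerate_triple :: "nat list \<Rightarrow> nat \<times> nat \<Rightarrow> bool" where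
  "in_degenerate_triple lam u \<longleftrightarrow>
     (\<exists>r i j. degenerate_triple lam (r, i, j) \<and> (u = (r, i) \<or> u = (r, j)))"

definition Phi_nondeg :: "nat list \<Rightarrow> (nat \<times> nat \<Rightarrow> int) \<Rightarrow> bool" where
  "Phi_nondeg lam \<sigma> \<longleftrightarrow> has_dist_label lam \<sigma> \<and> \<not> in_degenerate_triple lam (dist_cell lam \<sigma>)"

definition Phi :: "nat \<times> nat \<Rightarrow> (nat \<times> nat \<Rightarrow> int) \<Rightarrow> (nat \<times> nat \<Rightarrow> int)" where
  "Phi u \<sigma> = \<sigma>(u := - \<sigma> u)"

end

theory Submission
  imports Defs "HOL-Library.Product_Lexorder"
begin

text \<open>Let \<open>a\<close> be the distinguished label and \<open>u = (r, j)\<close> the distinguished cell.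
  By minimality of \<open>a\<close>, every cell in a row \<open>\<ge> a\<close> carries a letter of absolute value
  \<open>\<ge> a\<close>, and every such cell read before \<open>u\<close> one of absolute value \<open>> a\<close>. Among these
  letters, \<open>\<sigma> u\<close> is the least one for \<open><\<^sub>2\<close> when positive and the greatest when negative,
  and flipping it preserves whether a non-degenerate triple containing \<open>u\<close> is a quinv
  triple. For maj only the descents at \<open>u\<close> and at the cell above \<open>u\<close> can change: if
  \<open>\<sigma> u > 0\<close>, flipping it creates a descent at \<open>u\<close> of weight \<open>\<lambda>\<^sub>j - r + 1\<close> and destroys the
  one above of weight \<open>\<lambda>\<^sub>j - r\<close>, so maj grows by one while p drops by one.\<close>

lemma Ind_left_of_least_abs:
  assumes "0 < \<bar>s\<bar>" "\<bar>s\<bar> \<le> \<bar>c\<bar>"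
  shows "Ind s c \<longleftrightarrow> s < 0"
  using assms unfolding Ind_def lt2_def by (auto simp: abs_if split: if_splits)

lemma Ind_right_of_least_abs:
  assumes "0 < \<bar>s\<bar>" "\<bar>s\<bar> < \<bar>c\<bar>"
  shows "Ind c s \<longleftrightarrow> 0 < s"
  using assms unfolding Ind_def lt2_def by (auto simp: abs_if split: if_splits)

definition quinv_letters :: "int \<Rightarrow> int \<Rightarrow> int \<Rightarrow> bool" where
  "quinv_letters a b c \<longleftrightarrow>
     of_bool (Ind a b) + of_bool (\<not> Ind c b) + of_bool (\<not> Ind a c) = (1::nat)"

lemma quinv_triple_eq:
  "quinv_triple lam \<sigma> (r, i, j) = quinv_letters (triple_top lam \<sigma> r i) (\<sigma> (r, i)) (\<sigma> (r, j))"
  unfolding quinv_triple_def quinv_letters_def Let_def by simp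

lemma quinv_letters_neg_top:
  assumes "0 < \<bar>s\<bar>" "\<bar>s\<bar> \<le> \<bar>b\<bar>" "\<bar>s\<bar> \<le> \<bar>c\<bar>"
  shows "quinv_letters (- s) b c = quinv_letters s b c"
  using assms Ind_left_of_least_abs[of s b] Ind_left_of_least_abs[of s c]
    Ind_left_of_least_abs[of "- s" b] Ind_left_of_least_abs[of "- s" c]
  unfolding quinv_letters_def by auto

lemma quinv_letters_neg_left:
  assumes "0 < \<bar>s\<bar>" "\<bar>s\<bar> < \<bar>a\<bar>" "\<bar>s\<bar> < \<bar>c\<bar>"
  shows "quinv_letters a (- s) c = quinv_letters a s c"
  using assms Ind_right_of_least_abs[of s a] Ind_right_of_least_abs[of s c]
    Ind_right_of_least_abs[of "- s" a] Ind_right_of_least_abs[of "- s" c]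
  unfolding quinv_letters_def by auto

lemma quinv_letters_neg_right:
  assumes "0 < \<bar>s\<bar>" "\<bar>s\<bar> < \<bar>a\<bar>" "\<bar>s\<bar> \<le> \<bar>b\<bar>"
  shows "quinv_letters a b (- s) = quinv_letters a b s"
  using assms Ind_left_of_least_abs[of s b] Ind_right_of_least_abs[of s a]
    Ind_left_of_least_abs[of "- s" b] Ind_right_of_least_abs[of "- s" a]
  unfolding quinv_letters_def by auto

lemma finite_dg: "finite (dg lam)"
proof (rule finite_subset)
  show "dg lam \<subseteq> {..sum_list lam} \<times> {..length lam}"
    by (auto simp: dg_def part_def intro!: order_trans[OF _ elem_le_sum_list])
qed auto

lemma Phi_apply: "Phi u \<sigma> v = (if v = u then - \<sigma> u else \<sigma> v)"
  by (simp add: Phi_def)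

lemma abs_Phi [simp]: "\<bar>Phi u \<sigma> v\<bar> = \<bar>\<sigma> v\<bar>"
  by (simp add: Phi_def)

lemma Phi_Phi [simp]: "Phi u (Phi u \<sigma>) = \<sigma>"
  by (auto simp: Phi_def)

lemma dist_cell_Phi: "dist_cell lam (Phi u \<sigma>) = dist_cell lam \<sigma>"
  unfolding dist_cell_def dist_label_def by simp

lemma Phi_nondeg_Phi: "Phi_nondeg lam (Phi u \<sigma>) = Phi_nondeg lam \<sigma>"
  unfolding Phi_nondeg_def has_dist_label_def dist_cell_Phi by simp

lemma reads_before_iff_less: "reads_before u v \<longleftrightarrow> v < u"
  by (cases u, cases v) (auto simp: reads_before_def less_prod_def)

lemma dist_label_witness:
  assumes "has_dist_label lam \<sigma>"
  shows "0 < dist_label lam \<sigma> \<and>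
    (\<exists>(r, j)\<in>dg lam. \<bar>\<sigma> (r, j)\<bar> = int (dist_label lam \<sigma>) \<and> r > dist_label lam \<sigma>)"
  using LeastI_ex[OF assms[unfolded has_dist_label_def]] unfolding dist_label_def .

lemma dist_label_le_abs:
  assumes "super_filling lam \<sigma>" "v \<in> dg lam" "dist_label lam \<sigma> \<le> fst v"
  shows "int (dist_label lam \<sigma>) \<le> \<bar>\<sigma> v\<bar>"
proof (rule ccontr)
  assume small: "\<not> int (dist_label lam \<sigma>) \<le> \<bar>\<sigma> v\<bar>"
  have "\<sigma> v \<noteq> 0"
    using assms(1,2) unfolding super_filling_def by auto
  with small assms(2,3) have "dist_label lam \<sigma> \<le> nat \<bar>\<sigma> v\<bar>"
    unfolding dist_label_def by (intro Least_le) (cases v, force)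
  with small show False by auto
qed

lemma dist_cell_eq_Max:
  assumes "has_dist_label lam \<sigma>"
  shows "dist_cell lam \<sigma> = Max {v \<in> dg lam. \<bar>\<sigma> v\<bar> = int (dist_label lam \<sigma>)}"
    (is "_ = Max ?S")
proof -
  have "finite ?S" "?S \<noteq> {}"
    using finite_dg dist_label_witness[OF assms] by auto
  then have max: "Max ?S \<in> ?S" and ge: "\<And>v. v \<in> ?S \<Longrightarrow> v \<le> Max ?S"
    using Max_in Max_ge by blast+
  show ?thesis
    unfolding dist_cell_def reads_before_iff_less
  proof (rule the_equality)
    fix x
    assume x: "x \<in> dg lam \<and> \<bar>\<sigma> x\<bar> = int (dist_label lam \<sigma>) \<and>
      (\<forall>v\<in>dg lam. \<bar>\<sigma> v\<bar> = int (dist_label lam \<sigma>) \<longrightarrow> v \<noteq> x \<longrightarrow> v < x)"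
    then have "x \<le> Max ?S" "x \<noteq> Max ?S \<Longrightarrow> Max ?S < x"
      using ge max by auto
    then show "x = Max ?S"
      by fastforce
  qed (use max ge in \<open>auto simp: order.order_iff_strict\<close>)
qed

definition descent_weight :: "nat list \<Rightarrow> (nat \<times> nat \<Rightarrow> int) \<Rightarrow> nat \<times> nat \<Rightarrow> nat" where
  "descent_weight lam \<tau> v = (if descent lam \<tau> v then leg lam v + 1 else 0)"

lemma maj_eq_sum_descent_weight: "maj lam \<tau> = sum (descent_weight lam \<tau>) (dg lam)"
proof -
  have "{v. descent lam \<tau> v} = {v \<in> dg lam. descent lam \<tau> v}"
    by (auto simp: descent_def)
  then show ?thesis
    unfolding maj_def descent_weight_def by (simp only: sum.inter_filter[OF finite_dg])
qed

lemma maj_split_two_cells: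
  assumes "u \<in> dg lam" "u \<noteq> w"
  shows "maj lam \<tau> = descent_weight lam \<tau> u + descent_weight lam \<tau> w +
    sum (descent_weight lam \<tau>) (dg lam - {u, w})"
proof -
  have "descent_weight lam \<tau> w = 0" if "w \<notin> dg lam"
    using that by (simp add: descent_weight_def descent_def)
  then have "maj lam \<tau> = sum (descent_weight lam \<tau>) (insert w (dg lam))"
    unfolding maj_eq_sum_descent_weight
    by (cases "w \<in> dg lam") (simp_all add: insert_absorb finite_dg)
  also have "\<dots> = descent_weight lam \<tau> w + sum (descent_weight lam \<tau>) (dg lam - {w})"
    by (simp add: sum.insert_remove finite_dg)
  also have "sum (descent_weight lam \<tau>) (dg lam - {w}) =
      descent_weight lam \<tau> u + sum (descent_weight lam \<tau>) (dg lam - {u, w})"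
    using assms
    by (subst sum.remove[of _ u]) (auto simp: finite_dg Diff_insert2 [symmetric] insert_commute)
  finally show ?thesis
    by simp
qed

lemma descent_weight_Phi_other:
  assumes "1 \<le> fst u" "v \<noteq> u" "v \<noteq> (fst u + 1, snd u)"
  shows "descent_weight lam (Phi u \<tau>) v = descent_weight lam \<tau> v"
proof -
  have "descent lam (Phi u \<tau>) v = descent lam \<tau> v"
    using assms unfolding descent_def Phi_apply by (cases u, cases v) auto
  then show ?thesis
    by (simp add: descent_weight_def)
qed

lemma pos_count_Phi_of_pos:
  assumes "u \<in> dg lam" "0 < \<tau> u"
  shows "pos_count lam \<tau> = pos_count lam (Phi u \<tau>) + 1"
proof -
  have "{v \<in> dg lam. 0 < \<tau> v} = insert u {v \<in> dg lam. 0 < Phi u \<tau> v}"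
    "u \<notin> {v \<in> dg lam. 0 < Phi u \<tau> v}"
    using assms by (auto simp: Phi_apply)
  then show ?thesis
    unfolding pos_count_def by (simp add: finite_dg)
qed

locale dist_cell_setting =
  fixes lam :: "nat list" and \<sigma> :: "nat \<times> nat \<Rightarrow> int" and u :: "nat \<times> nat" and a :: int
  assumes cell: "u \<in> dg lam"
    and label_pos: "0 < a"
    and abs_cell: "\<bar>\<sigma> u\<bar> = a"
    and label_less_row: "a < int (fst u)"
    and label_le_abs: "\<And>v. v \<in> dg lam \<Longrightarrow> a \<le> int (fst v) \<Longrightarrow> a \<le> \<bar>\<sigma> v\<bar>"
    and first_of_label: "\<And>v. v \<in> dg lam \<Longrightarrow> \<bar>\<sigma> v\<bar> = a \<Longrightarrow> v \<noteq> u \<Longrightarrow> reads_before u v"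
    and nondeg: "\<not> in_degenerate_triple lam u"
begin

lemma Phi_setting: "dist_cell_setting lam (Phi u \<sigma>) u a"
  by unfold_locales
    (use cell label_pos abs_cell label_less_row label_le_abs first_of_label nondeg in auto)

lemma label_less_abs_if_reads_before:
  assumes v: "v \<in> dg lam" "reads_before v u"
  shows "a < \<bar>\<sigma> v\<bar>"
proof -
  have "a \<le> int (fst v)"
    using v(2) label_less_row unfolding reads_before_def by auto
  then have "a \<le> \<bar>\<sigma> v\<bar>"
    using label_le_abs v(1) by blast
  moreover have "\<not> reads_before u v" "v \<noteq> u"
    using v(2) unfolding reads_before_def by auto
  then have "\<bar>\<sigma> v\<bar> \<noteq> a"
    using first_of_label[OF v(1)] by blast
  ultimately show ?thesis
    by simp
qed

lemma quinv_triple_Phi: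
  assumes t: "(r, i, k) \<in> triples lam"
  shows "quinv_triple lam (Phi u \<sigma>) (r, i, k) = quinv_triple lam \<sigma> (r, i, k)"
proof -
  have ri: "(r, i) \<in> dg lam" and rk: "(r, k) \<in> dg lam" and "i < k"
    and top: "(r + 1, i) \<in> dg lam \<or> part lam i = r"
    using t by (auto simp: triples_def)
  have nondeg_t: "(r + 1, i) \<in> dg lam \<and> part lam i \<noteq> r" if "u = (r, i) \<or> u = (r, k)"
    using nondeg that t top unfolding in_degenerate_triple_def degenerate_triple_def by auto
  have label: "0 < \<bar>\<sigma> u\<bar>"
    using abs_cell label_pos by simp
  consider "u = (r, i)" | "u = (r, k)" | "u = (r + 1, i)" | "u \<notin> {(r, i), (r, k), (r + 1, i)}"
    by blast
  then show ?thesis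
  proof cases
    case 1
    have "\<bar>\<sigma> u\<bar> < \<bar>\<sigma> (r + 1, i)\<bar>" "\<bar>\<sigma> u\<bar> < \<bar>\<sigma> (r, k)\<bar>"
      using label_less_abs_if_reads_before nondeg_t rk 1 \<open>i < k\<close> abs_cell
      by (auto simp: reads_before_def)
    with 1 nondeg_t quinv_letters_neg_left[OF label] show ?thesis
      unfolding quinv_triple_eq triple_top_def Phi_apply by auto
  next
    case 2
    have "\<bar>\<sigma> u\<bar> < \<bar>\<sigma> (r + 1, i)\<bar>" "\<bar>\<sigma> u\<bar> \<le> \<bar>\<sigma> (r, i)\<bar>"
      using label_less_abs_if_reads_before label_le_abs ri nondeg_t 2 abs_cell label_less_row
      by (auto simp: reads_before_def)
    with 2 \<open>i < k\<close> nondeg_t quinv_letters_neg_right[OF label] show ?thesis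
      unfolding quinv_triple_eq triple_top_def Phi_apply by auto
  next
    case 3
    then have "part lam i \<noteq> r"
      using cell by (auto simp: dg_def)
    moreover have "\<bar>\<sigma> u\<bar> \<le> \<bar>\<sigma> (r, i)\<bar>" "\<bar>\<sigma> u\<bar> \<le> \<bar>\<sigma> (r, k)\<bar>"
      using label_le_abs ri rk 3 label_less_row abs_cell by auto
    ultimately show ?thesis
      using 3 quinv_letters_neg_top[OF label]
      unfolding quinv_triple_eq triple_top_def Phi_apply by auto
  next
    case 4
    then show ?thesis
      unfolding quinv_triple_eq triple_top_def Phi_apply by auto
  qed
qed

lemma quinv_Phi: "quinv lam (Phi u \<sigma>) = quinv lam \<sigma>"
  unfolding quinv_def using quinv_triple_Phi by (metis (no_types, lifting) prod_cases3)

lemma maj_Phi_of_pos: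
  assumes pos: "0 < \<sigma> u"
  shows "maj lam (Phi u \<sigma>) = maj lam \<sigma> + 1"
proof -
  obtain r j where u: "u = (r, j)"
    by (cases u)
  define w where "w = (r + 1, j)"
  have r: "2 \<le> r" "r \<le> part lam j" and below: "(r - 1, j) \<in> dg lam"
    using cell label_less_row label_pos unfolding u by (auto simp: dg_def)
  have "\<bar>\<sigma> u\<bar> \<le> \<bar>\<sigma> (r - 1, j)\<bar>"
    using label_le_abs[OF below] abs_cell label_less_row u by auto
  then have weight_u:
      "descent_weight lam \<sigma> u = 0" "descent_weight lam (Phi u \<sigma>) u = part lam j - r + 1"
    using Ind_left_of_least_abs[of "\<sigma> u"] Ind_left_of_least_abs[of "- \<sigma> u"] pos cell r u
    unfolding descent_weight_def descent_def Phi_apply leg_def by auto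
  \<comment> \<open>also when the cell \<open>w\<close> above \<open>u\<close> is absent, since then \<open>part lam j = r\<close>\<close>
  have weight_w: "descent_weight lam \<sigma> w = part lam j - r \<and> descent_weight lam (Phi u \<sigma>) w = 0"
  proof (cases "w \<in> dg lam")
    case True
    then have "\<bar>\<sigma> u\<bar> < \<bar>\<sigma> w\<bar>"
      using label_less_abs_if_reads_before abs_cell unfolding u w_def reads_before_def by auto
    then have "Ind (\<sigma> w) (\<sigma> u)" "\<not> Ind (\<sigma> w) (- \<sigma> u)"
      using Ind_right_of_least_abs[of "\<sigma> u"] Ind_right_of_least_abs[of "- \<sigma> u"] pos by auto
    moreover have "leg lam w + 1 = part lam j - r" "(fst w - 1, snd w) = u" "w \<noteq> u"
      using True unfolding leg_def w_def u by (auto simp: dg_def)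
    ultimately show ?thesis
      using True r unfolding descent_weight_def descent_def Phi_apply w_def by simp
  next
    case False
    then show ?thesis
      using cell r unfolding descent_weight_def descent_def u w_def by (auto simp: dg_def)
  qed
  have rest: "sum (descent_weight lam (Phi u \<sigma>)) (dg lam - {u, w}) =
      sum (descent_weight lam \<sigma>) (dg lam - {u, w})"
    using r u w_def by (intro sum.cong refl descent_weight_Phi_other) auto
  have "u \<noteq> w"
    using u w_def by simp
  with maj_split_two_cells[OF cell] weight_u weight_w rest show ?thesis
    by simp
qed

lemma pos_count_add_maj_Phi:
  "pos_count lam (Phi u \<sigma>) + maj lam (Phi u \<sigma>) = pos_count lam \<sigma> + maj lam \<sigma>"
proof (cases "0 < \<sigma> u")
  case True
  then show ?thesis
    using pos_count_Phi_of_pos[OF cell] maj_Phi_of_pos by simp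
next
  case False
  then have "0 < Phi u \<sigma> u"
    using abs_cell label_pos by (simp add: Phi_apply)
  then show ?thesis
    using pos_count_Phi_of_pos[OF cell, of "Phi u \<sigma>"]
      dist_cell_setting.maj_Phi_of_pos[OF Phi_setting]
    by simp
qed

end

lemma dist_cell_setting_dist_cell:
  assumes "super_filling lam \<sigma>" "Phi_nondeg lam \<sigma>"
  shows "dist_cell_setting lam \<sigma> (dist_cell lam \<sigma>) (int (dist_label lam \<sigma>))"
proof -
  let ?a = "dist_label lam \<sigma>" and ?S = "{v \<in> dg lam. \<bar>\<sigma> v\<bar> = int (dist_label lam \<sigma>)}"
  have label: "has_dist_label lam \<sigma>" and nondeg: "\<not> in_degenerate_triple lam (dist_cell lam \<sigma>)"
    using assms(2) unfolding Phi_nondeg_def by auto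
  obtain r j where w: "(r, j) \<in> ?S" "?a < r" and pos: "0 < ?a"
    using dist_label_witness[OF label] by auto
  have "finite ?S"
    using finite_dg by simp
  then have max: "dist_cell lam \<sigma> \<in> ?S" and ge: "(r, j) \<le> dist_cell lam \<sigma>"
    using w Max_in Max_ge unfolding dist_cell_eq_Max[OF label] by blast+
  then have "?a < fst (dist_cell lam \<sigma>)"
    using w by (cases "dist_cell lam \<sigma>") (auto simp: less_eq_prod_def)
  moreover have "reads_before (dist_cell lam \<sigma>) v" if "v \<in> ?S" "v \<noteq> dist_cell lam \<sigma>" for v
    using that \<open>finite ?S\<close> unfolding reads_before_iff_less dist_cell_eq_Max[OF label]
    by (simp add: order.not_eq_order_implies_strict)
  ultimately show ?thesis
    using max pos nondeg dist_label_le_abs[OF assms(1)] by unfold_locales auto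
qed

theorem mainTheorem11:
  fixes lam :: "nat list" and \<sigma> :: "nat \<times> nat \<Rightarrow> int" and u :: "nat \<times> nat"
  assumes "is_partition lam"
    and "super_filling lam \<sigma>"
    and "Phi_nondeg lam \<sigma>"
    and "u = dist_cell lam \<sigma>"
  shows "Phi_nondeg lam (Phi u \<sigma>) \<and> dist_cell lam (Phi u \<sigma>) = u \<and>
         pos_count lam (Phi u \<sigma>) + maj lam (Phi u \<sigma>) = pos_count lam \<sigma> + maj lam \<sigma> \<and>
         quinv lam (Phi u \<sigma>) = quinv lam \<sigma>"
proof -
  interpret dist_cell_setting lam \<sigma> u "int (dist_label lam \<sigma>)"
    using dist_cell_setting_dist_cell[OF assms(2,3)] assms(4) by simp
  show ?thesis
    using assms(3,4) Phi_nondeg_Phi dist_cell_Phi pos_count_add_maj_Phi quinv_Phi by simp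
qed

end
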